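(* Let $n,m\in\mathbb{N}$, let $p>1$, let $E_0>E_D>0$, and define $E:[0,1]\to(0,\infty)$ by $E(\delta)=\left(\frac{1-\delta}{E_0}+\frac{\delta}{E_D}\right)^{-1}$. Let $\hat{\mathbf K}_1,\dots,\hat{\mathbf K}_n\in\mathbb{R}^{m\times m}$ be symmetric positive semidefinite matrices, let $\mathbf f\in\mathbb{R}^m$, and let $\tilde{\boldsymbol\rho}\in\mathbb{R}^n$ with $\tilde\rho_e>0$ for all $e$. For $\boldsymbol\delta\in[0,1]^n$ set $\mathbf K_e(\boldsymbol\rho,\boldsymbol\delta)=\tilde\rho_e^{\,p}E(\delta_e)\hat{\mathbf K}_e$ and $\mathbf K(\boldsymbol\rho,\boldsymbol\delta)=\sum_{e=1}^n\mathbf K_e(\boldsymbol\rho,\boldsymbol\delta)$, and assume that $\mathbf K(\boldsymbol\rho,\boldsymbol\delta)$ is positive definite for all $\boldsymbol\delta\in[0,1]^n$. For $\epsilon\ge 0$ define $$\mathcal J_\epsilon(\boldsymbol\rho,\boldsymbol\delta,\mathbf u)=2\mathbf f^\top\mathbf u-\sum_{e=1}^n\mathbf u^\top\mathbf K_e(\boldsymbol\rho,\boldsymbol\delta)\mathbf u-\frac{\epsilon}{2}\|\boldsymbol\delta\|^2 .$$ Then, for fixed $\boldsymbol\rho$, the function $(\boldsymbol\delta,\mathbf u)\mapsto\mathcal J_\epsilon(\boldsymbol\rho,\boldsymbol\delta,\mathbf u)$ on $[0,1]^n\times\mathbb{R}^m$ is concave if $\epsilon=0$ and strictly concave if $\e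psilon>0$.
   Context: This is a discretized linear-elasticity compliance setting: $\hat{\mathbf K}_e$ is the element stiffness matrix of finite element $e$ for a unit material tensor, $\tilde{\boldsymbol\rho}$ is the (filtered) pseudo-density of a topology $\boldsymbol\rho$ (the dependence of $\mathbf K_e$ on $\boldsymbol\rho$ is only through $\tilde{\boldsymbol\rho}$), $p$ is the SIMP penalty exponent, and $\delta_e\in[0,1]$ is a material degradation parameter interpolating inversely between Young's moduli $E_0$ and $E_D$. *)

theory Defs
  imports "HOL-Analysis.Analysis"
begin

text \<open>Inverse (Reuss-type) interpolation of Young's moduli.\<close>
definition Emod :: "real \<Rightarrow> real \<Rightarrow> real \<Rightarrow> real" where
  "Emod E0 ED d = inverse ((1 - d) / E0 + d / ED)"

definition psd_matrix :: "real^'m^'m \<Rightarrow> bool" where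
  "psd_matrix A \<longleftrightarrow> transpose A = A \<and> (\<forall>x. 0 \<le> x \<bullet> (A *v x))"

definition pd_matrix :: "real^'m^'m \<Rightarrow> bool" where
  "pd_matrix A \<longleftrightarrow> transpose A = A \<and> (\<forall>x. x \<noteq> 0 \<longrightarrow> 0 < x \<bullet> (A *v x))"

definition strict_concave_on :: "'a::real_vector set \<Rightarrow> ('a \<Rightarrow> real) \<Rightarrow> bool" where
  "strict_concave_on S f \<longleftrightarrow> convex S \<and>
    (\<forall>x\<in>S. \<forall>y\<in>S. x \<noteq> y \<longrightarrow> (\<forall>t. 0 < t \<and> t < 1 \<longrightarrow>
        f ((1 - t) *\<^sub>R x + t *\<^sub>R y) > (1 - t) * f x + t * f y))"

definition unit_box :: "(real^'n) set" where
  "unit_box = {d. \<forall>e. 0 \<le> d $ e \<and> d $ e \<le> 1}"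

definition Kelem :: "real \<Rightarrow> real \<Rightarrow> real \<Rightarrow> ('n \<Rightarrow> real^'m^'m) \<Rightarrow> real^'n \<Rightarrow> real^'n \<Rightarrow> 'n \<Rightarrow> real^'m^'m" where
  "Kelem p E0 ED Khat rt d e = ((rt $ e) powr p * Emod E0 ED (d $ e)) *\<^sub>R Khat e"

definition Kglob :: "real \<Rightarrow> real \<Rightarrow> real \<Rightarrow> ('n::finite \<Rightarrow> real^'m^'m) \<Rightarrow> real^'n \<Rightarrow> real^'n \<Rightarrow> real^'m^'m" where
  "Kglob p E0 ED Khat rt d = (\<Sum>e\<in>UNIV. Kelem p E0 ED Khat rt d e)"

definition Jeps :: "real \<Rightarrow> real \<Rightarrow> real \<Rightarrow> real \<Rightarrow> ('n::finite \<Rightarrow> real^'m^'m) \<Rightarrow> real^'m \<Rightarrow> real^'n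
                    \<Rightarrow> real^'n \<Rightarrow> real^'m \<Rightarrow> real" where
  "Jeps eps p E0 ED Khat f rt d u =
     2 * (f \<bullet> u) - (\<Sum>e\<in>UNIV. u \<bullet> (Kelem p E0 ED Khat rt d e *v u)) - eps / 2 * (norm d)\<^sup>2"

end

theory Submission
  imports Defs
begin

(* Since E(\<delta>)^-1 is affine in \<delta>, every element term u^T K_e u has the form
   c_e q_e(u) / s_e(\<delta>_e) with c_e \<ge> 0, q_e a positive semidefinite quadratic form and s_e
   affine and positive on [0,1]. The quadratic-over-linear map (s, u) \<mapsto> q(u)/s is jointly
   convex for s > 0, so J_\<epsilon> is concave, and the penalty -\<epsilon>/2 |\<delta>|^2 makes it strictly concave
   in \<delta>. Along segments with fixed \<delta> the convexity gap of the stiffness terms is exactly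
   u^T K u for the difference of the endpoints, which is positive because K is positive
   definite. *)

definition compliance :: "real \<Rightarrow> real \<Rightarrow> real \<Rightarrow> real" where
  "compliance E0 ED d = (1 - d) / E0 + d / ED"

lemma Emod_eq_inverse_compliance: "Emod E0 ED d = inverse (compliance E0 ED d)"
  by (simp add: Emod_def compliance_def)

lemma compliance_convex_combination:
  "compliance E0 ED ((1 - t) * x + t * y) = (1 - t) * compliance E0 ED x + t * compliance E0 ED y"
  by (simp add: compliance_def divide_inverse algebra_simps)

lemma compliance_pos:
  assumes "E0 > 0" "ED > 0" "0 \<le> d" "d \<le> 1"
  shows "compliance E0 ED d > 0"
proof (cases "d = 0")
  case True
  then show ?thesis using assms by (simp add: compliance_def)
next
  case False
  then have "d / ED > 0" using assms by simp
  moreover have "(1 - d) / E0 \<ge> 0" using assms by simp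
  ultimately show ?thesis by (simp add: compliance_def)
qed

lemma convex_unit_box: "convex unit_box"
  unfolding convex_def unit_box_def by (auto intro: convex_bound_le)

lemma compliance_pos_unit_box:
  assumes "E0 > 0" "ED > 0" "d \<in> unit_box"
  shows "compliance E0 ED (d $ e) > 0"
  using assms by (intro compliance_pos) (auto simp: unit_box_def)

lemma sum_matrix_vector_mult:
  "finite S \<Longrightarrow> (\<Sum>e\<in>S. A e :: real^'n^'m) *v x = (\<Sum>e\<in>S. A e *v x)"
  by (induction S rule: finite_induct) (auto simp: matrix_vector_mult_add_rdistrib)

lemma quadratic_form_scaleR_add:
  fixes A :: "real^'n^'n"
  assumes "transpose A = A"
  shows "(a *\<^sub>R x + b *\<^sub>R y) \<bullet> (A *v (a *\<^sub>R x + b *\<^sub>R y)) =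
    a\<^sup>2 * (x \<bullet> (A *v x)) + 2 * a * b * (x \<bullet> (A *v y)) + b\<^sup>2 * (y \<bullet> (A *v y))"
proof -
  have "y \<bullet> (A *v x) = x \<bullet> (A *v y)"
    by (metis assms dot_lmul_matrix inner_commute transpose_matrix_vector)
  then show ?thesis
    by (simp add: matrix_vector_mult_add_rdistrib matrix_vector_mult_scaleR
        inner_add_left inner_add_right power2_eq_square algebra_simps)
qed

lemma quadratic_form_convex_combination:
  fixes A :: "real^'n^'n"
  assumes "transpose A = A"
  shows "((1 - t) *\<^sub>R x + t *\<^sub>R y) \<bullet> (A *v ((1 - t) *\<^sub>R x + t *\<^sub>R y)) =
    (1 - t) * (x \<bullet> (A *v x)) + t * (y \<bullet> (A *v y)) - t * (1 - t) * ((x - y) \<bullet> (A *v (x - y)))"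
  using quadratic_form_scaleR_add[OF assms, of "1 - t" x t y]
    quadratic_form_scaleR_add[OF assms, of 1 x "-1" y]
  by (simp add: power2_eq_square algebra_simps)

lemma quadratic_over_linear_convex:
  fixes A :: "real^'n^'n"
  assumes "psd_matrix A" "s1 > 0" "s2 > 0" "0 \<le> t" "t \<le> 1"
  defines "q \<equiv> \<lambda>v. v \<bullet> (A *v v)"
  shows "q ((1 - t) *\<^sub>R u1 + t *\<^sub>R u2) / ((1 - t) * s1 + t * s2) \<le> (1 - t) * q u1 / s1 + t * q u2 / s2"
proof -
  define s where "s = (1 - t) * s1 + t * s2"
  define r where "r = u1 \<bullet> (A *v u2)"
  have sym: "transpose A = A" using assms(1) by (simp add: psd_matrix_def)
  have "s > 0" using assms(2-5) unfolding s_def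
    by (smt (verit) mult_nonneg_nonneg mult_pos_pos)
  have comb: "q ((1 - t) *\<^sub>R u1 + t *\<^sub>R u2) = (1 - t)\<^sup>2 * q u1 + 2 * (1 - t) * t * r + t\<^sup>2 * q u2"
    unfolding q_def r_def by (rule quadratic_form_scaleR_add[OF sym])
  have diff: "q (s2 *\<^sub>R u1 + (- s1) *\<^sub>R u2) = s2\<^sup>2 * q u1 - 2 * s1 * s2 * r + s1\<^sup>2 * q u2"
    unfolding q_def r_def using quadratic_form_scaleR_add[OF sym, of s2 u1 "- s1" u2] by simp
  have gap: "(1 - t) * q u1 / s1 + t * q u2 / s2 - q ((1 - t) *\<^sub>R u1 + t *\<^sub>R u2) / s
      = t * (1 - t) * q (s2 *\<^sub>R u1 + (- s1) *\<^sub>R u2) / (s1 * s2 * s)"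
    using \<open>s > 0\<close> assms(2,3) unfolding comb diff s_def
    by (simp add: divide_simps power2_eq_square) algebra
  have "q (s2 *\<^sub>R u1 + (- s1) *\<^sub>R u2) \<ge> 0"
    using assms(1) unfolding q_def psd_matrix_def by blast
  then have "t * (1 - t) * q (s2 *\<^sub>R u1 + (- s1) *\<^sub>R u2) / (s1 * s2 * s) \<ge> 0"
    using assms(2-5) \<open>s > 0\<close> by simp
  then show ?thesis using gap unfolding s_def by linarith
qed

lemma norm_convex_combination_power2:
  fixes x y :: "'a::real_inner"
  shows "(norm ((1 - t) *\<^sub>R x + t *\<^sub>R y))\<^sup>2 =
    (1 - t) * (norm x)\<^sup>2 + t * (norm y)\<^sup>2 - t * (1 - t) * (norm (x - y))\<^sup>2"
  unfolding power2_norm_eq_inner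
  by (simp add: inner_add_left inner_add_right inner_diff_left inner_diff_right
      inner_commute algebra_simps)

lemma quadratic_form_Kelem:
  "u \<bullet> (Kelem p E0 ED Khat rt d e *v u) =
    rt $ e powr p * (u \<bullet> (Khat e *v u)) / compliance E0 ED (d $ e)"
  by (simp add: Kelem_def Emod_eq_inverse_compliance scaleR_matrix_vector_assoc[symmetric]
      divide_inverse mult.commute mult.left_commute)

lemma Jeps_eq_Kglob:
  "Jeps eps p E0 ED Khat f rt d u =
    2 * (f \<bullet> u) - u \<bullet> (Kglob p E0 ED Khat rt d *v u) - eps / 2 * (norm d)\<^sup>2"
  by (simp add: Jeps_def Kglob_def sum_matrix_vector_mult inner_sum_right)

lemma Jeps_convex_combination_ge:
  fixes Khat :: "'n::finite \<Rightarrow> real^'m^'m"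
  assumes "E0 > 0" "ED > 0" "\<And>e. psd_matrix (Khat e)"
    and "d1 \<in> unit_box" "d2 \<in> unit_box" "0 \<le> t" "t \<le> 1"
  shows "(1 - t) * Jeps eps p E0 ED Khat f rt d1 u1 + t * Jeps eps p E0 ED Khat f rt d2 u2
      + t * (1 - t) * (eps / 2 * (norm (d1 - d2))\<^sup>2)
    \<le> Jeps eps p E0 ED Khat f rt ((1 - t) *\<^sub>R d1 + t *\<^sub>R d2) ((1 - t) *\<^sub>R u1 + t *\<^sub>R u2)"
proof -
  define d where "d = (1 - t) *\<^sub>R d1 + t *\<^sub>R d2"
  define u where "u = (1 - t) *\<^sub>R u1 + t *\<^sub>R u2"
  define w where "w = (\<lambda>d u e. u \<bullet> (Kelem p E0 ED Khat rt d e *v u))"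
  define W where "W = (\<lambda>d u. \<Sum>e\<in>UNIV. w d u e)"
  define P where "P = (\<lambda>d :: real^'n. eps / 2 * (norm d)\<^sup>2)"
  have J: "Jeps eps p E0 ED Khat f rt d' u' = 2 * (f \<bullet> u') - W d' u' - P d'" for d' u'
    by (simp add: Jeps_def W_def w_def P_def)
  have elem: "w d u e \<le> (1 - t) * w d1 u1 e + t * w d2 u2 e" for e
  proof -
    let ?q = "\<lambda>v. v \<bullet> (Khat e *v v)" and ?s = "compliance E0 ED"
    have "?s (d $ e) = (1 - t) * ?s (d1 $ e) + t * ?s (d2 $ e)"
      unfolding d_def by (simp add: compliance_convex_combination)
    then have "?q u / ?s (d $ e) \<le> (1 - t) * ?q u1 / ?s (d1 $ e) + t * ?q u2 / ?s (d2 $ e)"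
      unfolding u_def using assms
      by (simp add: quadratic_over_linear_convex compliance_pos_unit_box)
    then have "rt $ e powr p * (?q u / ?s (d $ e))
        \<le> rt $ e powr p * ((1 - t) * ?q u1 / ?s (d1 $ e) + t * ?q u2 / ?s (d2 $ e))"
      by (rule mult_left_mono) simp
    then show ?thesis unfolding w_def quadratic_form_Kelem by (simp add: algebra_simps)
  qed
  have "W d u \<le> (1 - t) * W d1 u1 + t * W d2 u2"
    unfolding W_def using sum_mono[of UNIV, OF elem] by (simp add: sum.distrib sum_distrib_left)
  moreover have "f \<bullet> u = (1 - t) * (f \<bullet> u1) + t * (f \<bullet> u2)"
    unfolding u_def by (simp add: inner_add_right)
  moreover have "P d = (1 - t) * P d1 + t * P d2 - t * (1 - t) * P (d1 - d2)"
    unfolding P_def d_def norm_convex_combination_power2 by (simp add: field_simps)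
  moreover have "eps / 2 * (norm (d1 - d2))\<^sup>2 = P (d1 - d2)"
    by (simp add: P_def)
  ultimately show ?thesis
    unfolding d_def[symmetric] u_def[symmetric] J by (simp add: algebra_simps)
qed

lemma concave_on_Jeps:
  fixes Khat :: "'n::finite \<Rightarrow> real^'m^'m"
  assumes "E0 > 0" "ED > 0" "\<And>e. psd_matrix (Khat e)" "eps \<ge> 0"
  shows "concave_on (unit_box \<times> UNIV) (\<lambda>(d, u). Jeps eps p E0 ED Khat f rt d u)"
  unfolding concave_on_def
proof (rule convex_onI)
  fix t :: real and x y :: "(real^'n) \<times> (real^'m)"
  assume t: "0 < t" "t < 1" and "x \<in> unit_box \<times> UNIV" "y \<in> unit_box \<times> UNIV"
  then obtain d1 u1 d2 u2 where xy: "x = (d1, u1)" "y = (d2, u2)" "d1 \<in> unit_box" "d2 \<in> unit_box"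
    by auto
  let ?J = "Jeps eps p E0 ED Khat f rt"
  have "(1 - t) * ?J d1 u1 + t * ?J d2 u2 + t * (1 - t) * (eps / 2 * (norm (d1 - d2))\<^sup>2)
      \<le> ?J ((1 - t) *\<^sub>R d1 + t *\<^sub>R d2) ((1 - t) *\<^sub>R u1 + t *\<^sub>R u2)"
    using assms(1-3) xy(3,4) t by (intro Jeps_convex_combination_ge) auto
  moreover have "t * (1 - t) * (eps / 2 * (norm (d1 - d2))\<^sup>2) \<ge> 0"
    using t assms(4) by simp
  ultimately show "- (case (1 - t) *\<^sub>R x + t *\<^sub>R y of (d, u) \<Rightarrow> ?J d u)
      \<le> (1 - t) * - (case x of (d, u) \<Rightarrow> ?J d u) + t * - (case y of (d, u) \<Rightarrow> ?J d u)"
    using xy(1,2) by simp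
qed (intro convex_Times convex_unit_box convex_UNIV)

lemma strict_concave_on_Jeps:
  fixes Khat :: "'n::finite \<Rightarrow> real^'m^'m"
  assumes "E0 > 0" "ED > 0" "\<And>e. psd_matrix (Khat e)"
    and "\<And>d. d \<in> unit_box \<Longrightarrow> pd_matrix (Kglob p E0 ED Khat rt d)" and "eps > 0"
  shows "strict_concave_on (unit_box \<times> UNIV) (\<lambda>(d, u). Jeps eps p E0 ED Khat f rt d u)"
  unfolding strict_concave_on_def
proof (intro conjI ballI allI impI)
  show "convex (unit_box \<times> (UNIV :: (real^'m) set))"
    by (intro convex_Times convex_unit_box convex_UNIV)
next
  fix x y :: "(real^'n) \<times> (real^'m)" and t :: real
  assume "x \<in> unit_box \<times> UNIV" "y \<in> unit_box \<times> UNIV" "x \<noteq> y" and t: "0 < t \<and> t < 1"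
  then obtain d1 u1 d2 u2 where xy: "x = (d1, u1)" "y = (d2, u2)" "d1 \<in> unit_box" "d2 \<in> unit_box"
    and ne: "(d1, u1) \<noteq> (d2, u2)"
    by auto
  let ?J = "Jeps eps p E0 ED Khat f rt"
  have "(1 - t) * ?J d1 u1 + t * ?J d2 u2 < ?J ((1 - t) *\<^sub>R d1 + t *\<^sub>R d2) ((1 - t) *\<^sub>R u1 + t *\<^sub>R u2)"
  proof (cases "d1 = d2")
    case True
    let ?K = "Kglob p E0 ED Khat rt d1"
    have pd: "pd_matrix ?K" using assms(4) xy(3) .
    have "(1 - t) *\<^sub>R d1 + t *\<^sub>R d1 = d1" by (simp flip: scaleR_add_left)
    moreover have "transpose ?K = ?K" using pd by (simp add: pd_matrix_def)
    note quadratic_form_convex_combination[OF this, of t u1 u2]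
    moreover have "f \<bullet> ((1 - t) *\<^sub>R u1 + t *\<^sub>R u2) = (1 - t) * (f \<bullet> u1) + t * (f \<bullet> u2)"
      by (simp add: inner_add_right)
    ultimately have "?J ((1 - t) *\<^sub>R d1 + t *\<^sub>R d1) ((1 - t) *\<^sub>R u1 + t *\<^sub>R u2)
        = (1 - t) * ?J d1 u1 + t * ?J d1 u2 + t * (1 - t) * ((u1 - u2) \<bullet> (?K *v (u1 - u2)))"
      unfolding Jeps_eq_Kglob by (simp add: algebra_simps) (simp add: field_simps)
    moreover have "0 < (u1 - u2) \<bullet> (?K *v (u1 - u2))"
      using pd ne True by (simp add: pd_matrix_def)
    ultimately show ?thesis
      using t True by simp
  next
    case False
    then have "0 < t * (1 - t) * (eps / 2 * (norm (d1 - d2))\<^sup>2)"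
      using t assms(5) by simp
    moreover have "(1 - t) * ?J d1 u1 + t * ?J d2 u2 + t * (1 - t) * (eps / 2 * (norm (d1 - d2))\<^sup>2)
        \<le> ?J ((1 - t) *\<^sub>R d1 + t *\<^sub>R d2) ((1 - t) *\<^sub>R u1 + t *\<^sub>R u2)"
      using assms(1-3) xy(3,4) t by (intro Jeps_convex_combination_ge) auto
    ultimately show ?thesis by linarith
  qed
  then show "(1 - t) * (case x of (d, u) \<Rightarrow> ?J d u) + t * (case y of (d, u) \<Rightarrow> ?J d u)
      < (case (1 - t) *\<^sub>R x + t *\<^sub>R y of (d, u) \<Rightarrow> ?J d u)"
    using xy(1,2) by simp
qed

theorem theorem1:
  fixes p E0 ED eps :: real
    and Khat :: "'n::finite \<Rightarrow> real^'m::finite^'m"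
    and f :: "real^'m" and rt :: "real^'n"
  assumes "p > 1" and "E0 > ED" and "ED > 0"
    and "\<And>e. psd_matrix (Khat e)"
    and "\<And>e. rt $ e > 0"
    and "\<And>d. d \<in> unit_box \<Longrightarrow> pd_matrix (Kglob p E0 ED Khat rt d)"
    and "eps \<ge> 0"
  shows "(eps = 0 \<longrightarrow> concave_on (unit_box \<times> UNIV) (\<lambda>(d, u). Jeps eps p E0 ED Khat f rt d u))
       \<and> (eps > 0 \<longrightarrow> strict_concave_on (unit_box \<times> UNIV) (\<lambda>(d, u). Jeps eps p E0 ED Khat f rt d u))"
proof -
  have "E0 > 0" using assms(2,3) by linarith
  then show ?thesis
    using concave_on_Jeps[of E0 ED Khat eps] strict_concave_on_Jeps[of E0 ED Khat p rt eps] assms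
    by blast
qed

end
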